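(* Let $n>1$ and $m$ be integers with $0<m<n$. Then the following maps are well defined, order-preserving and bijective: $$\mathcal{F}^{\leq\frac12}(n,m)\to\mathcal{F}^m_{n-m},\ \tfrac hk\mapsto\tfrac{h}{k-h};\qquad \mathcal{F}^m_{n-m}\to\mathcal{F}^{\leq\frac12}(n,m),\ \tfrac hk\mapsto\tfrac{h}{k+h};$$ $$\mathcal{F}^{\geq\frac12}(n,m)\to\mathcal{G}_m^{2m-n},\ \tfrac hk\mapsto\tfrac{2h-k}{h};\qquad \mathcal{G}_m^{2m-n}\to\mathcal{F}^{\geq\frac12}(n,m),\ \tfrac hk\mapsto\tfrac{k}{2k-h}.$$ Moreover, the following maps are well defined, order-reversing and bijective: $$\mathcal{F}^{\leq\frac12}(n,m)\to\mathcal{G}^{n-2m}_{n-m},\ \tfrac hk\mapsto\tfrac{k-2h}{k-h};\qquad \mathcal{G}^{n-2m}_{n-m}\to\mathcal{F}^{\leq\frac12}(n,m),\ \tfrac hk\mapsto\tfrac{k-h}{2k-h};$$ $$\mathcal{F}^{\geq\frac12}(n,m)\to\mathcal{F}^{n-m}_m,\ \tfrac hk\mapsto\tfrac{k-h}{h};\qquad \mathcal{F}^{n-m}_m\to\mathcal{F}^{\geq\frac12}(n,m),\ \tfrac hk\mapsto\tfrac{k}{k+h}.$$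
   Context: For an integer $N\geq 1$, the Farey sequence $\mathcal{F}_N$ is the ascending sequence of irreducible fractions $\tfrac hk$ (with $h\ge0$, $k\ge1$, $\gcd(h,k)=1$) such that $\tfrac01\leq\tfrac hk\leq\tfrac11$ and $1\leq k\leq N$. For integers $N\ge1$ and $M$, let $\mathcal{F}_N^M:=\left(\tfrac hk\in\mathcal{F}_N:\ h\leq M\right)$ and $\mathcal{G}_N^M:=\left(\tfrac hk\in\mathcal{F}_N:\ k-h\leq N-M\right)$. For $0<m<n$, let $\mathcal{F}(n,m):=\left(\tfrac hk\in\mathcal{F}_n:\ h\leq m,\ k-h\leq n-m\right)$ (this is the sequence of reduced fractions $\rho(b\wedge a)/\rho(b)$, over nonzero elements $b$ of the Boolean lattice of rank $n$, for a fixed element $a$ of rank $m$, where $\rho$ is rank). Its left halfsequence is $\mathcal{F}^{\leq\frac12}(n,m):=\left(\tfrac hk\in\mathcal{F}(n,m):\ \tfrac hk\leq\tfrac12\right)$ and its right halfsequence is $\mathcal{F}^{\geq\frac12}(n,m):=\left(\tfrac hk\in\mathcal{F}(n,m):\ \tfrac hk\geq\tfrac12\right)$. All sequences are ordered as rational numbers and fractions are written in lowest terms. *)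

theory Defs
  imports Main "HOL.Rat"
begin

text \<open>Fractions are rationals; the reduced form h/k (k > 0) of x is quotient_of x.\<close>

definition Farey :: "int \<Rightarrow> rat set" where
  "Farey N = {x. \<exists>h k. quotient_of x = (h, k) \<and> 0 \<le> h \<and> h \<le> k \<and> 1 \<le> k \<and> k \<le> N}"

definition FareyF :: "int \<Rightarrow> int \<Rightarrow> rat set" where
  "FareyF N M = {x \<in> Farey N. fst (quotient_of x) \<le> M}"

definition FareyG :: "int \<Rightarrow> int \<Rightarrow> rat set" where
  "FareyG N M = {x \<in> Farey N. snd (quotient_of x) - fst (quotient_of x) \<le> N - M}"

definition FareyB :: "int \<Rightarrow> int \<Rightarrow> rat set" where
  "FareyB n m = {x \<in> Farey n. fst (quotient_of x) \<le> m \<and>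
                   snd (quotient_of x) - fst (quotient_of x) \<le> n - m}"

definition FareyB_left :: "int \<Rightarrow> int \<Rightarrow> rat set" where
  "FareyB_left n m = {x \<in> FareyB n m. x \<le> 1/2}"

definition FareyB_right :: "int \<Rightarrow> int \<Rightarrow> rat set" where
  "FareyB_right n m = {x \<in> FareyB n m. x \<ge> 1/2}"

definition frac_map :: "(int \<Rightarrow> int \<Rightarrow> int) \<Rightarrow> (int \<Rightarrow> int \<Rightarrow> int) \<Rightarrow> rat \<Rightarrow> rat" where
  "frac_map p q x = (case quotient_of x of (h, k) \<Rightarrow> of_int (p h k) / of_int (q h k))"

definition order_reversing_on :: "rat set \<Rightarrow> (rat \<Rightarrow> rat) \<Rightarrow> bool" where
  "order_reversing_on A f \<longleftrightarrow> (\<forall>x\<in>A. \<forall>y\<in>A. x < y \<longrightarrow> f y < f x)"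

end

theory Submission
  imports Defs
begin

text \<open>Each of the eight maps sends the reduced fraction h/k to (a h + b k)/(c h + d k) for an
  integer matrix of determinant \<open>\<plusminus>1\<close>. Such a matrix preserves coprimality, so reduced pairs
  go to reduced pairs, and the inverse matrix gives the inverse map; the linear inequalities
  cutting out the source sequence are carried exactly onto those of the target sequence.
  Since f x - f y = det \<cdot> (x - y) \<cdot> k k' / (q q') with positive denominators q, q', the map
  is increasing for determinant 1 and decreasing for determinant -1.\<close>

definition frac_set :: "(int \<Rightarrow> int \<Rightarrow> bool) \<Rightarrow> rat set" where
  "frac_set P = {x. case_prod P (quotient_of x)}"

lemma quotient_of_fraction:
  "coprime a b \<Longrightarrow> 0 < b \<Longrightarrow> quotient_of (of_int a / of_int b) = (a, b)"
  by (metis Fract_of_int_quotient normalize_stable quotient_of_Fract)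

lemma frac_map_quotient:
  "quotient_of x = (h, k) \<Longrightarrow> frac_map p q x = of_int (p h k) / of_int (q h k)"
  by (simp add: frac_map_def)

lemma rat_le_half_iff:
  assumes "quotient_of x = (h, k)"
  shows "x \<le> 1 / 2 \<longleftrightarrow> 2 * h \<le> k"
proof -
  have "0 < k"
    using assms quotient_of_denom_pos by blast
  then have "x \<le> 1 / 2 \<longleftrightarrow> of_int (2 * h) \<le> (of_int k :: rat)"
    by (simp add: quotient_of_div[OF assms] divide_simps mult.commute)
  then show ?thesis
    by linarith
qed

lemma rat_ge_half_iff:
  assumes "quotient_of x = (h, k)"
  shows "1 / 2 \<le> x \<longleftrightarrow> k \<le> 2 * h"
proof -
  have "0 < k"
    using assms quotient_of_denom_pos by blast
  then have "1 / 2 \<le> x \<longleftrightarrow> of_int k \<le> (of_int (2 * h) :: rat)"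
    by (simp add: quotient_of_div[OF assms] divide_simps mult.commute)
  then show ?thesis
    by linarith
qed

lemma Farey_eq_frac_set: "Farey N = frac_set (\<lambda>h k. 0 \<le> h \<and> h \<le> k \<and> k \<le> N)"
  unfolding Farey_def frac_set_def
  using quotient_of_denom_pos by (metis (lifting) case_prod_conv int_one_le_iff_zero_less surj_pair)

lemma FareyF_eq_frac_set: "FareyF N M = frac_set (\<lambda>h k. 0 \<le> h \<and> h \<le> k \<and> k \<le> N \<and> h \<le> M)"
  by (auto simp: FareyF_def Farey_eq_frac_set frac_set_def split: prod.splits)

lemma FareyG_eq_frac_set:
  "FareyG N M = frac_set (\<lambda>h k. 0 \<le> h \<and> h \<le> k \<and> k \<le> N \<and> k - h \<le> N - M)"
  by (auto simp: FareyG_def Farey_eq_frac_set frac_set_def split: prod.splits)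

lemma FareyB_left_eq_frac_set:
  "FareyB_left n m = frac_set (\<lambda>h k. 0 \<le> h \<and> k \<le> n \<and> h \<le> m \<and> k - h \<le> n - m \<and> 2 * h \<le> k)"
proof (rule set_eqI)
  fix x
  obtain h k where hk: "quotient_of x = (h, k)" by force
  show "x \<in> FareyB_left n m \<longleftrightarrow> x \<in> frac_set (\<lambda>h k. 0 \<le> h \<and> k \<le> n \<and> h \<le> m \<and> k - h \<le> n - m \<and> 2 * h \<le> k)"
    unfolding FareyB_left_def FareyB_def Farey_eq_frac_set frac_set_def mem_Collect_eq
      hk rat_le_half_iff[OF hk]
    by auto
qed

lemma FareyB_right_eq_frac_set:
  "FareyB_right n m = frac_set (\<lambda>h k. h \<le> k \<and> k \<le> n \<and> h \<le> m \<and> k - h \<le> n - m \<and> k \<le> 2 * h)"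
proof (rule set_eqI)
  fix x
  obtain h k where hk: "quotient_of x = (h, k)" by force
  show "x \<in> FareyB_right n m \<longleftrightarrow> x \<in> frac_set (\<lambda>h k. h \<le> k \<and> k \<le> n \<and> h \<le> m \<and> k - h \<le> n - m \<and> k \<le> 2 * h)"
    unfolding FareyB_right_def FareyB_def Farey_eq_frac_set frac_set_def mem_Collect_eq
      hk rat_ge_half_iff[OF hk]
    using quotient_of_denom_pos[OF hk] by auto
qed

lemma coprime_unimodular:
  fixes a b c d h k :: int
  assumes "coprime h k" and "\<bar>a * d - b * c\<bar> = 1"
  shows "coprime (a * h + b * k) (c * h + d * k)"
proof (rule coprimeI)
  fix g assume g: "g dvd a * h + b * k" "g dvd c * h + d * k"
  have "g dvd d * (a * h + b * k) - b * (c * h + d * k)"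
    "g dvd a * (c * h + d * k) - c * (a * h + b * k)"
    using g by simp_all
  then have "g dvd (a * d - b * c) * h" "g dvd (a * d - b * c) * k"
    by (simp_all add: algebra_simps)
  moreover have "is_unit (a * d - b * c)"
    using assms(2) by simp
  ultimately have "g dvd h" "g dvd k"
    by (simp_all add: dvd_mult_unit_iff')
  then show "is_unit g"
    using assms(1) coprime_common_divisor by blast
qed

lemma frac_map_maps_to_and_cancels:
  assumes "x \<in> frac_set P"
    and coprime: "\<And>h k. coprime h k \<Longrightarrow> coprime (p h k) (q h k)"
    and PQ: "\<And>h k. P h k \<Longrightarrow> 0 < k \<Longrightarrow> 0 < q h k \<and> Q (p h k) (q h k)"
    and inverse: "\<And>h k. p' (p h k) (q h k) = h" "\<And>h k. q' (p h k) (q h k) = k"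
  shows "frac_map p q x \<in> frac_set Q" and "frac_map p' q' (frac_map p q x) = x"
proof -
  obtain h k where hk: "quotient_of x = (h, k)" by force
  then have "P h k" "0 < k" "coprime h k"
    using assms(1) quotient_of_denom_pos quotient_of_coprime by (auto simp: frac_set_def)
  then have "quotient_of (frac_map p q x) = (p h k, q h k)" "Q (p h k) (q h k)"
    using PQ coprime quotient_of_fraction by (auto simp: frac_map_quotient[OF hk])
  then show "frac_map p q x \<in> frac_set Q" "frac_map p' q' (frac_map p q x) = x"
    by (simp_all add: frac_set_def frac_map_quotient quotient_of_div[OF hk] inverse)
qed

lemma bij_betw_frac_map:
  assumes coprime: "\<And>h k. coprime h k \<Longrightarrow> coprime (p h k) (q h k)"
      "\<And>h k. coprime h k \<Longrightarrow> coprime (p' h k) (q' h k)"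
    and inverse: "\<And>h k. p' (p h k) (q h k) = h" "\<And>h k. q' (p h k) (q h k) = k"
      "\<And>h k. p (p' h k) (q' h k) = h" "\<And>h k. q (p' h k) (q' h k) = k"
    and PQ: "\<And>h k. P h k \<Longrightarrow> 0 < k \<Longrightarrow> 0 < q h k \<and> Q (p h k) (q h k)"
    and QP: "\<And>h k. Q h k \<Longrightarrow> 0 < k \<Longrightarrow> 0 < q' h k \<and> P (p' h k) (q' h k)"
  shows "bij_betw (frac_map p q) (frac_set P) (frac_set Q)"
proof (rule bij_betw_byWitness[where f' = "frac_map p' q'"])
  show "\<forall>x\<in>frac_set P. frac_map p' q' (frac_map p q x) = x"
    "frac_map p q ` frac_set P \<subseteq> frac_set Q"
    using frac_map_maps_to_and_cancels[OF _ coprime(1) PQ inverse(1,2)] by auto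
  show "\<forall>x\<in>frac_set Q. frac_map p q (frac_map p' q' x) = x"
    "frac_map p' q' ` frac_set Q \<subseteq> frac_set P"
    using frac_map_maps_to_and_cancels[OF _ coprime(2) QP inverse(3,4)] by auto
qed

lemma frac_map_diff:
  assumes hk: "quotient_of x = (h, k)" and hk': "quotient_of y = (h', k')"
    and "q h k \<noteq> 0" "q h' k' \<noteq> 0"
    and det: "p h k * q h' k' - p h' k' * q h k = e * (h * k' - h' * k)"
  shows "frac_map p q x - frac_map p q y
           = of_int e * (x - y) * (of_int (k * k') / of_int (q h k * q h' k'))"
proof -
  have "k \<noteq> 0" "k' \<noteq> 0"
    using hk hk' quotient_of_denom_pos by fastforce+
  have "frac_map p q x - frac_map p q y = of_int (e * (h * k' - h' * k)) / of_int (q h k * q h' k')"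
    using assms by (simp add: frac_map_quotient diff_frac_eq flip: of_int_mult of_int_diff)
  moreover have "x - y = of_int (h * k' - h' * k) / of_int (k * k')"
    using \<open>k \<noteq> 0\<close> \<open>k' \<noteq> 0\<close>
    by (simp add: quotient_of_div[OF hk] quotient_of_div[OF hk'] diff_frac_eq)
  ultimately show ?thesis
    using \<open>k \<noteq> 0\<close> \<open>k' \<noteq> 0\<close> by simp
qed

lemma frac_map_sgn_diff:
  assumes "x \<in> frac_set P" "y \<in> frac_set P"
    and pos: "\<And>h k. P h k \<Longrightarrow> 0 < k \<Longrightarrow> 0 < q h k"
    and det: "\<And>h k h' k'. p h k * q h' k' - p h' k' * q h k = e * (h * k' - h' * k)"
  shows "sgn (frac_map p q x - frac_map p q y) = sgn (of_int e) * sgn (x - y)"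
proof -
  obtain h k h' k' where hk: "quotient_of x = (h, k)" and hk': "quotient_of y = (h', k')"
    by force
  have "0 < k" "0 < k'" "0 < q h k" "0 < q h' k'"
    using assms(1,2) pos hk hk' quotient_of_denom_pos by (auto simp: frac_set_def)
  then have "0 < (of_int (k * k') / of_int (q h k * q h' k') :: rat)"
    by simp
  then show ?thesis
    using frac_map_diff[OF hk hk' _ _ det] \<open>0 < k\<close> \<open>0 < k'\<close> \<open>0 < q h k\<close> \<open>0 < q h' k'\<close>
    by (simp add: sgn_mult)
qed

lemma strict_mono_on_frac_map:
  assumes pos: "\<And>h k. P h k \<Longrightarrow> 0 < k \<Longrightarrow> 0 < q h k"
    and det: "\<And>h k h' k'. p h k * q h' k' - p h' k' * q h k = h * k' - h' * k"
  shows "strict_mono_on (frac_set P) (frac_map p q)"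
proof (rule strict_mono_onI)
  fix x y assume "x \<in> frac_set P" "y \<in> frac_set P" "x < y"
  moreover have "sgn (frac_map p q x - frac_map p q y) = sgn (of_int 1) * sgn (x - y)"
    by (rule frac_map_sgn_diff[where P = P]) (use \<open>x \<in> frac_set P\<close> \<open>y \<in> frac_set P\<close> pos det in auto)
  ultimately show "frac_map p q x < frac_map p q y"
    by (simp add: sgn_if split: if_splits)
qed

lemma order_reversing_on_frac_map:
  assumes pos: "\<And>h k. P h k \<Longrightarrow> 0 < k \<Longrightarrow> 0 < q h k"
    and det: "\<And>h k h' k'. p h k * q h' k' - p h' k' * q h k = h' * k - h * k'"
  shows "order_reversing_on (frac_set P) (frac_map p q)"
  unfolding order_reversing_on_def
proof (intro ballI impI)
  fix x y assume "x \<in> frac_set P" "y \<in> frac_set P" "x < y"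
  moreover have "sgn (frac_map p q x - frac_map p q y) = sgn (of_int (-1)) * sgn (x - y)"
    by (rule frac_map_sgn_diff[where P = P]) (use \<open>x \<in> frac_set P\<close> \<open>y \<in> frac_set P\<close> pos det in auto)
  ultimately show "frac_map p q y < frac_map p q x"
    by (simp add: sgn_if split: if_splits)
qed

lemma linear_cross_det:
  fixes a b c d :: int
  assumes p: "\<And>h k. p h k = a * h + b * k" and q: "\<And>h k. q h k = c * h + d * k"
  shows "p h k * q h' k' - p h' k' * q h k = (a * d - b * c) * (h * k' - h' * k)"
  unfolding p q by algebra

lemma bij_betw_frac_map_unimodular:
  fixes a b c d e :: int
  assumes det: "a * d - b * c = e" "\<bar>e\<bar> = 1"
    and p: "\<And>h k. p h k = a * h + b * k" and q: "\<And>h k. q h k = c * h + d * k"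
    and p': "\<And>h k. p' h k = e * (d * h - b * k)" and q': "\<And>h k. q' h k = e * (a * k - c * h)"
    and PQ: "\<And>h k. P h k \<Longrightarrow> 0 < k \<Longrightarrow> 0 < q h k \<and> Q (p h k) (q h k)"
    and QP: "\<And>h k. Q h k \<Longrightarrow> 0 < k \<Longrightarrow> 0 < q' h k \<and> P (p' h k) (q' h k)"
  shows "bij_betw (frac_map p q) (frac_set P) (frac_set Q)"
    and "bij_betw (frac_map p' q') (frac_set Q) (frac_set P)"
proof -
  have ee: "e * e = 1"
    using det(2) by (auto simp: abs_if split: if_splits)
  have p'_lin: "p' h k = (e * d) * h + (- e * b) * k" and q'_lin: "q' h k = (- e * c) * h + (e * a) * k"
    for h k by (simp_all add: p' q' algebra_simps)
  have "(e * d) * (e * a) - (- e * b) * (- e * c) = e * e * (a * d - b * c)"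
    by algebra
  then have det': "\<bar>(e * d) * (e * a) - (- e * b) * (- e * c)\<bar> = 1"
    using det ee by simp
  have coprime: "coprime (p h k) (q h k)" "coprime (p' h k) (q' h k)" if "coprime h k" for h k
    unfolding p q p'_lin q'_lin
    using coprime_unimodular[OF that det(2)[folded det(1)]] coprime_unimodular[OF that det']
    by simp_all
  have inverse: "p' (p h k) (q h k) = h" "q' (p h k) (q h k) = k"
      "p (p' h k) (q' h k) = h" "q (p' h k) (q' h k) = k" for h k
  proof -
    have "p' (p h k) (q h k) = e * (a * d - b * c) * h" "q' (p h k) (q h k) = e * (a * d - b * c) * k"
      "p (p' h k) (q' h k) = e * (a * d - b * c) * h" "q (p' h k) (q' h k) = e * (a * d - b * c) * k"
      unfolding p q p' q' by algebra+
    then show "p' (p h k) (q h k) = h" "q' (p h k) (q h k) = k"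
      "p (p' h k) (q' h k) = h" "q (p' h k) (q' h k) = k"
      using det(1) ee by simp_all
  qed
  show "bij_betw (frac_map p q) (frac_set P) (frac_set Q)"
    by (rule bij_betw_frac_map[OF coprime inverse PQ QP])
  show "bij_betw (frac_map p' q') (frac_set Q) (frac_set P)"
    by (rule bij_betw_frac_map[OF coprime(2,1) inverse(3,4,1,2) QP PQ])
qed

lemma increasing_frac_correspondence:
  fixes a b c d :: int
  assumes det: "a * d - b * c = 1"
    and p: "\<And>h k. p h k = a * h + b * k" and q: "\<And>h k. q h k = c * h + d * k"
    and p': "\<And>h k. p' h k = d * h - b * k" and q': "\<And>h k. q' h k = a * k - c * h"
    and PQ: "\<And>h k. P h k \<Longrightarrow> 0 < k \<Longrightarrow> 0 < q h k \<and> Q (p h k) (q h k)"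
    and QP: "\<And>h k. Q h k \<Longrightarrow> 0 < k \<Longrightarrow> 0 < q' h k \<and> P (p' h k) (q' h k)"
  shows "(bij_betw (frac_map p q) (frac_set P) (frac_set Q)
            \<and> strict_mono_on (frac_set P) (frac_map p q))
       \<and> (bij_betw (frac_map p' q') (frac_set Q) (frac_set P)
            \<and> strict_mono_on (frac_set Q) (frac_map p' q'))"
proof -
  have p'_lin: "p' h k = d * h + (- b) * k" and q'_lin: "q' h k = (- c) * h + a * k" for h k
    by (simp_all add: p' q')
  have "p' h k = 1 * (d * h - b * k)" "q' h k = 1 * (a * k - c * h)" for h k
    by (simp_all add: p' q')
  note bij = bij_betw_frac_map_unimodular[OF det _ p q this PQ QP]
  have "strict_mono_on (frac_set P) (frac_map p q)"
    by (rule strict_mono_on_frac_map) (use PQ linear_cross_det[OF p q] det in auto)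
  moreover have "strict_mono_on (frac_set Q) (frac_map p' q')"
    by (rule strict_mono_on_frac_map) (use QP linear_cross_det[OF p'_lin q'_lin] det in \<open>auto simp: algebra_simps\<close>)
  ultimately show ?thesis
    using bij by simp
qed

lemma decreasing_frac_correspondence:
  fixes a b c d :: int
  assumes det: "a * d - b * c = -1"
    and p: "\<And>h k. p h k = a * h + b * k" and q: "\<And>h k. q h k = c * h + d * k"
    and p': "\<And>h k. p' h k = b * k - d * h" and q': "\<And>h k. q' h k = c * h - a * k"
    and PQ: "\<And>h k. P h k \<Longrightarrow> 0 < k \<Longrightarrow> 0 < q h k \<and> Q (p h k) (q h k)"
    and QP: "\<And>h k. Q h k \<Longrightarrow> 0 < k \<Longrightarrow> 0 < q' h k \<and> P (p' h k) (q' h k)"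
  shows "(bij_betw (frac_map p q) (frac_set P) (frac_set Q)
            \<and> order_reversing_on (frac_set P) (frac_map p q))
       \<and> (bij_betw (frac_map p' q') (frac_set Q) (frac_set P)
            \<and> order_reversing_on (frac_set Q) (frac_map p' q'))"
proof -
  have p'_lin: "p' h k = (- d) * h + b * k" and q'_lin: "q' h k = c * h + (- a) * k" for h k
    by (simp_all add: p' q')
  have "p' h k = - 1 * (d * h - b * k)" "q' h k = - 1 * (a * k - c * h)" for h k
    by (simp_all add: p' q')
  note bij = bij_betw_frac_map_unimodular[OF det _ p q this PQ QP]
  have "order_reversing_on (frac_set P) (frac_map p q)"
    by (rule order_reversing_on_frac_map) (use PQ linear_cross_det[OF p q] det in auto)
  moreover have "order_reversing_on (frac_set Q) (frac_map p' q')"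
    by (rule order_reversing_on_frac_map) (use QP linear_cross_det[OF p'_lin q'_lin] det in \<open>auto simp: algebra_simps\<close>)
  ultimately show ?thesis
    using bij by simp
qed

theorem theorem2:
  fixes n m :: int
  assumes "n > 1" and "0 < m" and "m < n"
  shows
"(bij_betw (frac_map (\<lambda>h k. h) (\<lambda>h k. k - h)) (FareyB_left n m) (FareyF (n - m) m) \<and>
    strict_mono_on (FareyB_left n m) (frac_map (\<lambda>h k. h) (\<lambda>h k. k - h)))
\<and> (bij_betw (frac_map (\<lambda>h k. h) (\<lambda>h k. k + h)) (FareyF (n - m) m) (FareyB_left n m) \<and>
    strict_mono_on (FareyF (n - m) m) (frac_map (\<lambda>h k. h) (\<lambda>h k. k + h)))
\<and> (bij_betw (frac_map (\<lambda>h k. 2*h - k) (\<lambda>h k. h)) (FareyB_right n m) (FareyG m (2*m - n)) \<and>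
    strict_mono_on (FareyB_right n m) (frac_map (\<lambda>h k. 2*h - k) (\<lambda>h k. h)))
\<and> (bij_betw (frac_map (\<lambda>h k. k) (\<lambda>h k. 2*k - h)) (FareyG m (2*m - n)) (FareyB_right n m) \<and>
    strict_mono_on (FareyG m (2*m - n)) (frac_map (\<lambda>h k. k) (\<lambda>h k. 2*k - h)))
\<and> (bij_betw (frac_map (\<lambda>h k. k - 2*h) (\<lambda>h k. k - h)) (FareyB_left n m) (FareyG (n - m) (n - 2*m)) \<and>
    order_reversing_on (FareyB_left n m) (frac_map (\<lambda>h k. k - 2*h) (\<lambda>h k. k - h)))
\<and> (bij_betw (frac_map (\<lambda>h k. k - h) (\<lambda>h k. 2*k - h)) (FareyG (n - m) (n - 2*m)) (FareyB_left n m) \<and>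
    order_reversing_on (FareyG (n - m) (n - 2*m)) (frac_map (\<lambda>h k. k - h) (\<lambda>h k. 2*k - h)))
\<and> (bij_betw (frac_map (\<lambda>h k. k - h) (\<lambda>h k. h)) (FareyB_right n m) (FareyF m (n - m)) \<and>
    order_reversing_on (FareyB_right n m) (frac_map (\<lambda>h k. k - h) (\<lambda>h k. h)))
\<and> (bij_betw (frac_map (\<lambda>h k. k) (\<lambda>h k. k + h)) (FareyF m (n - m)) (FareyB_right n m) \<and>
    order_reversing_on (FareyF m (n - m)) (frac_map (\<lambda>h k. k) (\<lambda>h k. k + h)))"
proof -
  have "(bij_betw (frac_map (\<lambda>h k. h) (\<lambda>h k. k - h)) (FareyB_left n m) (FareyF (n - m) m) \<and>
      strict_mono_on (FareyB_left n m) (frac_map (\<lambda>h k. h) (\<lambda>h k. k - h)))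
    \<and> (bij_betw (frac_map (\<lambda>h k. h) (\<lambda>h k. k + h)) (FareyF (n - m) m) (FareyB_left n m) \<and>
      strict_mono_on (FareyF (n - m) m) (frac_map (\<lambda>h k. h) (\<lambda>h k. k + h)))"
    unfolding FareyB_left_eq_frac_set FareyF_eq_frac_set
    by (rule increasing_frac_correspondence[where a = 1 and b = 0 and c = "-1" and d = 1]) auto
  moreover have "(bij_betw (frac_map (\<lambda>h k. 2*h - k) (\<lambda>h k. h)) (FareyB_right n m) (FareyG m (2*m - n)) \<and>
      strict_mono_on (FareyB_right n m) (frac_map (\<lambda>h k. 2*h - k) (\<lambda>h k. h)))
    \<and> (bij_betw (frac_map (\<lambda>h k. k) (\<lambda>h k. 2*k - h)) (FareyG m (2*m - n)) (FareyB_right n m) \<and>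
      strict_mono_on (FareyG m (2*m - n)) (frac_map (\<lambda>h k. k) (\<lambda>h k. 2*k - h)))"
    unfolding FareyB_right_eq_frac_set FareyG_eq_frac_set
    by (rule increasing_frac_correspondence[where a = 2 and b = "-1" and c = 1 and d = 0]) auto
  moreover have "(bij_betw (frac_map (\<lambda>h k. k - 2*h) (\<lambda>h k. k - h)) (FareyB_left n m) (FareyG (n - m) (n - 2*m)) \<and>
      order_reversing_on (FareyB_left n m) (frac_map (\<lambda>h k. k - 2*h) (\<lambda>h k. k - h)))
    \<and> (bij_betw (frac_map (\<lambda>h k. k - h) (\<lambda>h k. 2*k - h)) (FareyG (n - m) (n - 2*m)) (FareyB_left n m) \<and>
      order_reversing_on (FareyG (n - m) (n - 2*m)) (frac_map (\<lambda>h k. k - h) (\<lambda>h k. 2*k - h)))"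
    unfolding FareyB_left_eq_frac_set FareyG_eq_frac_set
    by (rule decreasing_frac_correspondence[where a = "-2" and b = 1 and c = "-1" and d = 1]) auto
  moreover have "(bij_betw (frac_map (\<lambda>h k. k - h) (\<lambda>h k. h)) (FareyB_right n m) (FareyF m (n - m)) \<and>
      order_reversing_on (FareyB_right n m) (frac_map (\<lambda>h k. k - h) (\<lambda>h k. h)))
    \<and> (bij_betw (frac_map (\<lambda>h k. k) (\<lambda>h k. k + h)) (FareyF m (n - m)) (FareyB_right n m) \<and>
      order_reversing_on (FareyF m (n - m)) (frac_map (\<lambda>h k. k) (\<lambda>h k. k + h)))"
    unfolding FareyB_right_eq_frac_set FareyF_eq_frac_set
    by (rule decreasing_frac_correspondence[where a = "-1" and b = 1 and c = 1 and d = 0]) auto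
  ultimately show ?thesis
    by blast
qed

end
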